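(* In the construction described in the context, the set $L_\infty:=\bigcup_{k\in\mathbb{N}}i_k(L_k)$ is dense in $(P_\infty,\rho_\infty)$.
   Context: Construction. Let $(e_n)$ be the canonical basis of $\ell^1(\mathbb{N})$; $\alpha(t)=t$ on $[0,\frac12]$, $\alpha(t)=1-t$ on $[\frac12,1]$; $S_n=\{te_1+\alpha(t)e_{n+1}:t\in[0,1]\}$; $x_n=(\frac12-\frac1{2^n})e_1$, $x_\infty=\frac12e_1$; $Y=\bigcup_{n\ge1}(2^{-(n+1)}S_n+x_n)\cup\{x_\infty\}$ with the $\ell^1$ metric $\theta$. $Y$ is the image of an arc-length parametrized injective curve $\gamma:[0,1]\to Y$ with $\gamma(0)=0$, $\gamma(1)=x_\infty$. For $r>0$ let $\theta_r(s,t)=r\,\theta(\gamma(s/r),\gamma(t/r))$ on $[0,r]$. Set $P_1=[0,1]$, $\rho_1=\theta_1$, $L_1=\{1\}$. Given $(P_k,\rho_k)$ with $P_k\subset[0,1]^k$ and $L_k\subset P_k$, let $\pi_k$ denote the $k$-th coordinate, choose a countable dense subset $Q_k=\{q_n:n\in\mathbb{N}\}$ (distinct $q_n$) of $P_k\setminus L_k$ with $\pi_k$ injective on $Q_k$ and $0\notin\pi_k(Q_k)$, set $r_n=2^{-(n+k)}$, $d_n=\theta_{r_n}$, and let $P_{k+1}=\{(x,0):x\in P_k\setminus Q_k\}\cup\{(q_n,y):n\in\mathbb{N},y\in[0,r_n]\}\subset[0,1]^{k+1}$ with metric $\rho_{k+1}((x_1,y_1),(x_2,y_2))$ equal to $d_n(y_1,y_2)$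 if $x_1=x_2=q_n$; $d_n(y_1,0)+\rho_k(x_1,x_2)+d_m(0,y_2)$ if $x_1=q_n,x_2=q_m$, $n\ne m$; $d_n(y_1,0)+\rho_k(x_1,x_2)$ if $x_1=q_n$, $x_2\notin Q_k$ (and symmetrically); $\rho_k(x_1,x_2)$ if $x_1,x_2\notin Q_k$. Let $L_{k+1}=(L_k\times\{0\})\cup\{(q_n,r_n):n\in\mathbb{N}\}$. Let $i_k:P_k\to[0,1]^{\mathbb{N}}$, $i_k(x)=(x_1,\dots,x_k,0,0,\dots)$; $\mathcal P_\infty=\bigcup_k i_k(P_k)$ with the metric $\rho_\infty(x,y)=\rho_k(i_k^{-1}x,i_k^{-1}y)$ for $x,y\in i_k(P_k)$; $(P_\infty,\rho_\infty)$ is the completion of $(\mathcal P_\infty,\rho_\infty)$. *)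

theory Defs
  imports "HOL-Analysis.Analysis"
begin

section \<open>The space l1(N), modelled as nat => real (coordinate 0 unused)\<close>

definition e :: "nat \<Rightarrow> nat \<Rightarrow> real" where
  "e n = (\<lambda>i. if i = n then 1 else 0)"

definition theta :: "(nat \<Rightarrow> real) \<Rightarrow> (nat \<Rightarrow> real) \<Rightarrow> real" where
  "theta x y = (\<Sum>i. \<bar>x i - y i\<bar>)"

definition alpha :: "real \<Rightarrow> real" where
  "alpha t = (if t \<le> 1/2 then t else 1 - t)"

definition Sseg :: "nat \<Rightarrow> (nat \<Rightarrow> real) set" where
  "Sseg n = {(\<lambda>i. t * e 1 i + alpha t * e (Suc n) i) | t. t \<in> {0..1}}"

definition xpt :: "nat \<Rightarrow> nat \<Rightarrow> real" where
  "xpt n = (\<lambda>i. (1/2 - 1/2^n) * e 1 i)"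

definition xinf :: "nat \<Rightarrow> real" where
  "xinf = (\<lambda>i. (1/2) * e 1 i)"

definition Ycurve :: "(nat \<Rightarrow> real) set" where
  "Ycurve = (\<Union>n\<in>{1::nat..}. (\<lambda>p i. (1/2)^(n+1) * p i + xpt n i) ` Sseg n) \<union> {xinf}"

definition curve_length :: "('a \<Rightarrow> 'a \<Rightarrow> real) \<Rightarrow> (real \<Rightarrow> 'a) \<Rightarrow> real \<Rightarrow> real \<Rightarrow> ereal" where
  "curve_length d g a b =
     (SUP (m, p) \<in> {(m, p). p 0 = a \<and> p m = b \<and> (\<forall>i<m. p i \<le> p (Suc i))}.
        ereal (\<Sum>i<m. d (g (p i)) (g (p (Suc i)))))"

definition arc_length_param :: "('a \<Rightarrow> 'a \<Rightarrow> real) \<Rightarrow> (real \<Rightarrow> 'a) \<Rightarrow> bool" where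
  "arc_length_param d g \<longleftrightarrow>
     (\<forall>s t. 0 \<le> s \<and> s \<le> t \<and> t \<le> 1 \<longrightarrow> curve_length d g s t = ereal (t - s))"

definition admissible_curve :: "(real \<Rightarrow> nat \<Rightarrow> real) \<Rightarrow> bool" where
  "admissible_curve g \<longleftrightarrow>
     g ` {0..1} = Ycurve \<and> inj_on g {0..1} \<and> g 0 = (\<lambda>i. 0) \<and> g 1 = xinf \<and>
     arc_length_param theta g"

definition theta_r :: "(real \<Rightarrow> nat \<Rightarrow> real) \<Rightarrow> real \<Rightarrow> real \<Rightarrow> real \<Rightarrow> real" where
  "theta_r g r s t = r * theta (g (s / r)) (g (t / r))"

definition rad :: "nat \<Rightarrow> nat \<Rightarrow> real" where
  "rad k n = (1/2) ^ (n + k)"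

text \<open>Points of [0,1]^k are lists of length k; embed = i_k.\<close>
definition embed :: "real list \<Rightarrow> nat \<Rightarrow> real" where
  "embed x = (\<lambda>j. if j < length x then x ! j else 0)"

text \<open>The inductive construction, with the choices q k n (n >= 1) of the dense sets Q_k
  as parameters. pi_k (k-th coordinate) is x ! (k-1).\<close>
definition construction ::
  "(real \<Rightarrow> nat \<Rightarrow> real) \<Rightarrow> (nat \<Rightarrow> real list set) \<Rightarrow> (nat \<Rightarrow> real list \<Rightarrow> real list \<Rightarrow> real)
    \<Rightarrow> (nat \<Rightarrow> real list set) \<Rightarrow> (nat \<Rightarrow> nat \<Rightarrow> real list) \<Rightarrow> bool" where
  "construction g P \<rho> L q \<longleftrightarrow>
     P 1 = {[t] | t. t \<in> {0..1}} \<and>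
     (\<forall>s\<in>{0..1}. \<forall>t\<in>{0..1}. \<rho> 1 [s] [t] = theta_r g 1 s t) \<and>
     L 1 = {[1]} \<and>
     (\<forall>k\<ge>1.
        inj_on (q k) {1..} \<and>
        q k ` {1..} \<subseteq> P k - L k \<and>
        (\<forall>x\<in>P k - L k. \<forall>\<epsilon>>0. \<exists>n\<ge>1. \<rho> k x (q k n) < \<epsilon>) \<and>
        inj_on (\<lambda>x. x ! (k - 1)) (q k ` {1..}) \<and>
        (\<forall>n\<ge>1. q k n ! (k - 1) \<noteq> 0) \<and>
        P (Suc k) = {x @ [0] | x. x \<in> P k - q k ` {1..}}
                    \<union> {q k n @ [y] | n y. n \<ge> 1 \<and> y \<in> {0..rad k n}} \<and>
        (\<forall>n\<ge>1. \<forall>m\<ge>1. \<forall>y1\<in>{0..rad k n}. \<forall>y2\<in>{0..rad k m}.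
           \<rho> (Suc k) (q k n @ [y1]) (q k m @ [y2]) =
             (if n = m then theta_r g (rad k n) y1 y2
              else theta_r g (rad k n) y1 0 + \<rho> k (q k n) (q k m) + theta_r g (rad k m) 0 y2)) \<and>
        (\<forall>n\<ge>1. \<forall>y1\<in>{0..rad k n}. \<forall>x\<in>P k - q k ` {1..}.
           \<rho> (Suc k) (q k n @ [y1]) (x @ [0]) = theta_r g (rad k n) y1 0 + \<rho> k (q k n) x \<and>
           \<rho> (Suc k) (x @ [0]) (q k n @ [y1]) = \<rho> k x (q k n) + theta_r g (rad k n) 0 y1) \<and>
        (\<forall>x1\<in>P k - q k ` {1..}. \<forall>x2\<in>P k - q k ` {1..}.
           \<rho> (Suc k) (x1 @ [0]) (x2 @ [0]) = \<rho> k x1 x2) \<and>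
        L (Suc k) = {x @ [0] | x. x \<in> L k} \<union> {q k n @ [rad k n] | n. n \<ge> 1})"

definition Pcal_inf :: "(nat \<Rightarrow> real list set) \<Rightarrow> (nat \<Rightarrow> real) set" where
  "Pcal_inf P = (\<Union>k\<in>{1..}. embed ` P k)"

definition L_inf :: "(nat \<Rightarrow> real list set) \<Rightarrow> (nat \<Rightarrow> real) set" where
  "L_inf L = (\<Union>k\<in>{1..}. embed ` L k)"

text \<open>(C,dC) with j is a completion of (curly-P_inf, rho_inf): complete metric space,
  j isometric for rho_inf (rho_inf(i_k a, i_k b) = rho_k(a,b)), with dense image.\<close>
definition is_completion ::
  "(nat \<Rightarrow> real list set) \<Rightarrow> (nat \<Rightarrow> real list \<Rightarrow> real list \<Rightarrow> real)
    \<Rightarrow> 'c set \<Rightarrow> ('c \<Rightarrow> 'c \<Rightarrow> real) \<Rightarrow> ((nat \<Rightarrow> real) \<Rightarrow> 'c) \<Rightarrow> bool" where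
  "is_completion P \<rho> C dC j \<longleftrightarrow>
     Metric_space C dC \<and> Metric_space.mcomplete C dC \<and>
     j ` Pcal_inf P \<subseteq> C \<and>
     (\<forall>k\<ge>1. \<forall>a\<in>P k. \<forall>b\<in>P k. dC (j (embed a)) (j (embed b)) = \<rho> k a b) \<and>
     (Metric_space.mtopology C dC) closure_of (j ` Pcal_inf P) = C"

end

theory Submission
  imports Defs
begin

text \<open>A point of \<open>P\<^sub>k \<setminus> L\<^sub>k\<close> survives unchanged (up to appended zeros) to every later level
  \<open>P\<^sub>m \<setminus> L\<^sub>m\<close>, where it is approximated by a point \<open>q\<close> of \<open>Q\<^sub>m\<close>. The arc glued at \<open>q\<close> in
  level \<open>m + 1\<close> is a rescaled copy of the curve \<open>\<gamma>\<close> of length \<open>r \<le> 2\<^sup>-\<^sup>m\<close>, and its end point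
  \<open>(q, r)\<close> is a leaf in \<open>L\<^sub>m\<^sub>+\<^sub>1\<close> at distance \<open>r \<theta>(0, x\<^sub>\<infinity>) = r/2\<close> from \<open>q\<close>. So \<open>L\<^sub>\<infinity>\<close>
  approximates \<open>\<P>\<^sub>\<infinity>\<close>, which is dense in its completion.\<close>

lemma (in Metric_space) closure_of_eq_if_approximates_dense:
  assumes dense: "mtopology closure_of T = M"
    and approx: "\<And>t r. t \<in> T \<Longrightarrow> t \<in> M \<Longrightarrow> r > 0 \<Longrightarrow> \<exists>s\<in>S. s \<in> M \<and> d t s < r"
  shows "mtopology closure_of S = M"
proof -
  have "T \<inter> M \<subseteq> mtopology closure_of S"
    using approx unfolding metric_closure_of by fastforce
  then have "mtopology closure_of T \<subseteq> mtopology closure_of S"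
    by (metis closure_of_minimal closure_of_restrict closedin_closure_of inf_commute
        topspace_mtopology)
  then show ?thesis
    using dense closure_of_subset_topspace[of mtopology S] by auto
qed

lemma embed_append_zero: "embed (x @ [0]) = embed x"
  unfolding embed_def by (auto simp: nth_append fun_eq_iff)

lemma theta_zero_xinf: "theta (\<lambda>i. 0) xinf = 1/2"
proof -
  have "(\<lambda>i. \<bar>0 - xinf i\<bar>) = (\<lambda>i. if i = 1 then 1/2 else 0)"
    by (auto simp: xinf_def e_def fun_eq_iff)
  moreover have "(\<Sum>i. if i = (1::nat) then 1/2 else 0) = (1/2 :: real)"
    using sums_single[of 1 "\<lambda>_. 1/2 :: real"] sums_unique by fastforce
  ultimately show ?thesis
    unfolding theta_def by simp
qed

lemma theta_r_zero_end:
  assumes "admissible_curve g" "r > 0"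
  shows "theta_r g r 0 r = r / 2"
  using assms theta_zero_xinf unfolding admissible_curve_def theta_r_def by simp

lemma rad_pos: "rad k n > 0"
  unfolding rad_def by simp

lemma rad_le: "rad k n \<le> (1/2) ^ k"
  unfolding rad_def by (simp add: power_decreasing)

lemma construction_P_Suc:
  assumes "construction g P \<rho> L q" "k \<ge> 1"
  shows "P (Suc k) = {x @ [0] | x. x \<in> P k - q k ` {1..}}
                    \<union> {q k n @ [y] | n y. n \<ge> 1 \<and> y \<in> {0..rad k n}}"
  using assms(1) unfolding construction_def
  by (elim conjE) (drule spec[where x=k], drule mp[OF _ assms(2)], elim conjE, assumption)

lemma construction_L_Suc:
  assumes "construction g P \<rho> L q" "k \<ge> 1"
  shows "L (Suc k) = {x @ [0] | x. x \<in> L k} \<union> {q k n @ [rad k n] | n. n \<ge> 1}"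
  using assms(1) unfolding construction_def
  by (elim conjE) (drule spec[where x=k], drule mp[OF _ assms(2)], elim conjE, assumption)

lemma construction_q_mem:
  assumes "construction g P \<rho> L q" "k \<ge> 1" "n \<ge> 1"
  shows "q k n \<in> P k - L k"
proof -
  have "q k ` {1..} \<subseteq> P k - L k"
    using assms(1) unfolding construction_def
    by (elim conjE) (drule spec[where x=k], drule mp[OF _ assms(2)], elim conjE, assumption)
  then show ?thesis
    using \<open>n \<ge> 1\<close> by auto
qed

lemma construction_q_dense:
  assumes "construction g P \<rho> L q" "k \<ge> 1" "x \<in> P k - L k" "\<epsilon> > 0"
  shows "\<exists>n\<ge>1. \<rho> k x (q k n) < \<epsilon>"
proof -
  have "\<forall>x\<in>P k - L k. \<forall>\<epsilon>>0. \<exists>n\<ge>1. \<rho> k x (q k n) < \<epsilon>"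
    using assms(1) unfolding construction_def
    by (elim conjE) (drule spec[where x=k], drule mp[OF _ assms(2)], elim conjE, assumption)
  then show ?thesis
    using assms(3,4) by blast
qed

lemma construction_rho_same_arc:
  assumes "construction g P \<rho> L q" "k \<ge> 1" "n \<ge> 1" "y1 \<in> {0..rad k n}" "y2 \<in> {0..rad k n}"
  shows "\<rho> (Suc k) (q k n @ [y1]) (q k n @ [y2]) = theta_r g (rad k n) y1 y2"
proof -
  have "\<forall>n\<ge>1. \<forall>m\<ge>1. \<forall>y1\<in>{0..rad k n}. \<forall>y2\<in>{0..rad k m}.
           \<rho> (Suc k) (q k n @ [y1]) (q k m @ [y2]) =
             (if n = m then theta_r g (rad k n) y1 y2
              else theta_r g (rad k n) y1 0 + \<rho> k (q k n) (q k m) + theta_r g (rad k m) 0 y2)"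
    using assms(1) unfolding construction_def
    by (elim conjE) (drule spec[where x=k], drule mp[OF _ assms(2)], elim conjE, assumption)
  then show ?thesis
    using assms(3-5) by (metis (full_types))
qed

lemma construction_L_subset_P:
  assumes c: "construction g P \<rho> L q" and "k \<ge> 1"
  shows "L k \<subseteq> P k"
  using \<open>k \<ge> 1\<close>
proof (induction k rule: dec_induct)
  case base
  then show ?case
    using c unfolding construction_def by auto
next
  case (step k)
  have "x \<in> P k - q k ` {1..}" if "x \<in> L k" for x
    using that step construction_q_mem[OF c step(1)] by blast
  moreover have "rad k n \<in> {0..rad k n}" for n
    using rad_pos[of k n] by simp
  ultimately show ?case
    unfolding construction_L_Suc[OF c step(1)] construction_P_Suc[OF c step(1)] by blast
qed

lemma construction_append_zero:
  assumes c: "construction g P \<rho> L q" and "k \<ge> 1" "x \<in> P k - L k"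
  shows "x @ [0] \<in> P (Suc k) - L (Suc k)"
proof -
  have "(0::real) \<in> {0..rad k n}" for n
    using rad_pos[of k n] by simp
  then have "x @ [0] \<in> P (Suc k)"
    using assms(3) unfolding construction_P_Suc[OF c \<open>k \<ge> 1\<close>] by blast
  moreover have "x @ [0] \<notin> L (Suc k)"
    using assms(3) unfolding construction_L_Suc[OF c \<open>k \<ge> 1\<close>] by (auto simp: rad_def)
  ultimately show ?thesis
    by blast
qed

lemma construction_lift:
  assumes c: "construction g P \<rho> L q" and "k \<ge> 1" "k \<le> m" "x \<in> P k - L k"
  shows "\<exists>x'\<in>P m - L m. embed x' = embed x"
  using \<open>k \<le> m\<close>
proof (induction m rule: dec_induct)
  case base
  then show ?case
    using assms(4) by blast
next
  case (step m)
  then obtain x' where "x' \<in> P m - L m" "embed x' = embed x"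
    by blast
  then show ?case
    using construction_append_zero[OF c _ \<open>x' \<in> P m - L m\<close>] step(1) \<open>k \<ge> 1\<close>
    by (metis embed_append_zero order_trans)
qed

lemma construction_leaf_near_q:
  assumes "admissible_curve g" and c: "construction g P \<rho> L q" and "k \<ge> 1" "n \<ge> 1"
  shows "q k n @ [0] \<in> P (Suc k)" "q k n @ [rad k n] \<in> L (Suc k)"
    and "\<rho> (Suc k) (q k n @ [0]) (q k n @ [rad k n]) = rad k n / 2"
proof -
  have ends: "0 \<in> {0..rad k n}" "rad k n \<in> {0..rad k n}"
    using rad_pos[of k n] by auto
  show "q k n @ [0] \<in> P (Suc k)"
    using ends \<open>n \<ge> 1\<close> unfolding construction_P_Suc[OF c \<open>k \<ge> 1\<close>] by blast
  show "q k n @ [rad k n] \<in> L (Suc k)"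
    using \<open>n \<ge> 1\<close> unfolding construction_L_Suc[OF c \<open>k \<ge> 1\<close>] by blast
  show "\<rho> (Suc k) (q k n @ [0]) (q k n @ [rad k n]) = rad k n / 2"
    using construction_rho_same_arc[OF c \<open>k \<ge> 1\<close> \<open>n \<ge> 1\<close> ends]
      theta_r_zero_end[OF \<open>admissible_curve g\<close> rad_pos] by simp
qed

lemma completion_leaf_approximation:
  assumes curve: "admissible_curve g" and c: "construction g P \<rho> L q"
    and compl: "is_completion P \<rho> C dC j"
    and "k \<ge> 1" "x \<in> P k" "r > 0"
  shows "\<exists>l\<in>L_inf L. j l \<in> C \<and> dC (j (embed x)) (j l) < r"
proof -
  interpret Metric_space C dC
    using compl unfolding is_completion_def by blast
  have mem: "j (embed a) \<in> C" if "m \<ge> 1" "a \<in> P m" for m a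
    using compl that unfolding is_completion_def Pcal_inf_def by blast
  have dist: "dC (j (embed a)) (j (embed b)) = \<rho> m a b" if "m \<ge> 1" "a \<in> P m" "b \<in> P m" for m a b
    using compl that unfolding is_completion_def by blast
  show ?thesis
  proof (cases "x \<in> L k")
    case True
    then show ?thesis
      using mem[OF \<open>k \<ge> 1\<close> \<open>x \<in> P k\<close>] \<open>k \<ge> 1\<close> \<open>r > 0\<close> unfolding L_inf_def by force
  next
    case False
    obtain m0 where m0: "(1/2::real) ^ m0 < r"
      using real_arch_pow_inv[of r "1/2"] \<open>r > 0\<close> by auto
    define m where "m = max m0 k"
    have "m \<ge> 1" "k \<le> m"
      using \<open>k \<ge> 1\<close> by (auto simp: m_def)
    have "(1/2::real) ^ m \<le> (1/2) ^ m0"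
      by (rule power_decreasing) (auto simp: m_def)
    then have small_arc: "rad m n < r" for n
      using rad_le[of m n] m0 by linarith
    obtain x' where x': "x' \<in> P m - L m" "embed x' = embed x"
      using construction_lift[OF c \<open>k \<ge> 1\<close> \<open>k \<le> m\<close>] \<open>x \<in> P k\<close> False by blast
    obtain n where "n \<ge> 1" and near: "\<rho> m x' (q m n) < r / 2"
      using construction_q_dense[OF c \<open>m \<ge> 1\<close> \<open>x' \<in> P m - L m\<close>] \<open>r > 0\<close> by (meson half_gt_zero)
    note leaf = construction_leaf_near_q[OF curve c \<open>m \<ge> 1\<close> \<open>n \<ge> 1\<close>]
    define l where "l = embed (q m n @ [rad m n])"
    have "q m n \<in> P m"
      using construction_q_mem[OF c \<open>m \<ge> 1\<close> \<open>n \<ge> 1\<close>] by blast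
    have lP: "q m n @ [rad m n] \<in> P (Suc m)"
      using leaf(2) construction_L_subset_P[OF c, of "Suc m"] by auto
    have "dC (j (embed x)) (j l) \<le> dC (j (embed x')) (j (embed (q m n))) + dC (j (embed (q m n))) (j l)"
      using triangle mem \<open>m \<ge> 1\<close> x'(1) \<open>q m n \<in> P m\<close> lP unfolding l_def x'(2)[symmetric]
      by (metis DiffD1 le_SucI)
    also have "\<dots> = \<rho> m x' (q m n) + rad m n / 2"
      using dist[OF \<open>m \<ge> 1\<close> _ \<open>q m n \<in> P m\<close>, of x'] x'(1)
        dist[OF _ leaf(1) lP] leaf(3) embed_append_zero[of "q m n"] unfolding l_def by simp
    also have "\<dots> < r"
      using near small_arc[of n] by linarith
    finally have "dC (j (embed x)) (j l) < r" .
    moreover have "l \<in> L_inf L"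
      using leaf(2) \<open>m \<ge> 1\<close> unfolding l_def L_inf_def by force
    ultimately show ?thesis
      using mem[OF _ lP] unfolding l_def by auto
  qed
qed

theorem proposition4p10:
  fixes \<gamma> :: "real \<Rightarrow> nat \<Rightarrow> real"
    and P L :: "nat \<Rightarrow> real list set"
    and \<rho> :: "nat \<Rightarrow> real list \<Rightarrow> real list \<Rightarrow> real"
    and q :: "nat \<Rightarrow> nat \<Rightarrow> real list"
    and C :: "'c set" and dC :: "'c \<Rightarrow> 'c \<Rightarrow> real" and j :: "(nat \<Rightarrow> real) \<Rightarrow> 'c"
  assumes "admissible_curve \<gamma>"
    and "construction \<gamma> P \<rho> L q"
    and "is_completion P \<rho> C dC j"
  shows "(Metric_space.mtopology C dC) closure_of (j ` L_inf L) = C"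
proof -
  interpret Metric_space C dC
    using assms(3) unfolding is_completion_def by blast
  have "mtopology closure_of (j ` Pcal_inf P) = C"
    using assms(3) unfolding is_completion_def by blast
  then show ?thesis
  proof (rule closure_of_eq_if_approximates_dense)
    fix t and r :: real
    assume "t \<in> j ` Pcal_inf P" "r > 0"
    then obtain k x where "k \<ge> 1" "x \<in> P k" "t = j (embed x)"
      unfolding Pcal_inf_def by auto
    then show "\<exists>s\<in>j ` L_inf L. s \<in> C \<and> dC t s < r"
      using completion_leaf_approximation[OF assms \<open>k \<ge> 1\<close> \<open>x \<in> P k\<close> \<open>r > 0\<close>] by blast
  qed
qed

end
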